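(* Let $\Lambda_0$ be the even shift over $\{0,1\}$ (the subshift with forbidden words $1\,0^{2n+1}\,1$, $n\in\mathbb Z_{\ge0}$) and $\Lambda_1$ the odd shift over $\{0,1\}$ (forbidden words $1\,0^{2n}\,1$, $n\in\mathbb Z_{\ge0}$). Then the one-sided subshifts $(X_{\Lambda_0},\sigma_{\Lambda_0})$ and $(X_{\Lambda_1},\sigma_{\Lambda_1})$ are continuously orbit equivalent.
   Context: Both are normal subshifts. Subshifts over finite alphabet $\Sigma$: $B_l(\Lambda)$, $B_*(\Lambda)$ admissible words; $X_\Lambda=\{(x_n)_{n\in\mathbb N}:(x_n)_{n\in\mathbb Z}\in\Lambda\}$ with shift $\sigma_\Lambda$. $\Gamma_l^-(\mu)=\{\nu\in B_l(\Lambda):\nu\mu\in B_*(\Lambda)\}$, $\Gamma_*^+(\mu)=\{\nu:\mu\nu\in B_*(\Lambda)\}$; $\mu$ is $l$-synchronizing if $\Gamma_l^-(\mu)=\Gamma_l^-(\mu\omega)$ for all $\omega\in\Gamma_*^+(\mu)$, $S_l(\Lambda)$ the set of these; $\mu\sim_l\nu$ iff $\Gamma_l^-(\mu)=\Gamma_l^-(\nu)$. The minimal presentation $\mathfrak L=\mathfrak L_\Lambda^{\min}$ of a normal $\Lambda$ has vertex sets $V_0$ a singleton and $V_l=S_l(\Lambda)/\!\sim_l$, one edge labeled $\alpha$ from $[\alpha\nu]_l$ to $[\nu]_{l+1}$ for each $\nu\in S_{l+1}(\Lambda)$, $\alpha\nu\in B_*(\Lambda)$, and maps $\iota([\nu]_{l+1})=[\nu]_l$.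 Let $\Omega_{\mathfrak L}=\{(u^l)_{l\ge0}\in\prod_lV_l:\iota(u^{l+1})=u^l\}$; $E_{\mathfrak L}$ the set of $(u,\alpha,w)\in\Omega_{\mathfrak L}\times\Sigma\times\Omega_{\mathfrak L}$ such that for each $l$ there is an edge from $u^l$ to $w^{l+1}$ labeled $\alpha$; $X_{\mathfrak L}=\{(\alpha_i,u_i)_{i\in\mathbb N}:\exists u_0,\ (u_{i-1},\alpha_i,u_i)\in E_{\mathfrak L}\ \forall i\ge1\}$ with product topology, shift $\sigma_{\mathfrak L}$ and factor map $\pi_{\mathfrak L}((\alpha_i,u_i)_i)=(\alpha_i)_i$. For normal $\Lambda_0,\Lambda_1$ with $\mathfrak L_i=\mathfrak L_{\Lambda_i}^{\min}$, $X_{\Lambda_0}$ and $X_{\Lambda_1}$ are continuously orbit equivalent if there exist homeomorphisms $h_{\mathfrak L}:X_{\mathfrak L_0}\to X_{\mathfrak L_1}$, $h_\Lambda:X_{\Lambda_0}\to X_{\Lambda_1}$ and continuous $k_i,l_i:X_{\mathfrak L_i}\to\mathbb Z_{\ge0}$ with $\pi_{\mathfrak L_1}\circ h_{\mathfrak L}=h_\Lambda\circ\pi_{\mathfrak L_0}$, $\sigma_{\mathfrak L_1}^{k_0(x)}(h_{\mathfrak L}(\sigma_{\mathfrak L_0}(x)))=\sigma_{\mathfrak L_1}^{l_0(x)}(h_{\mathfrak L}(x))$ and $\sigma_{\mathfrak L_0}^{k_1(y)}(h_{\mathfrak L}^{-1}(\sigma_{\mathfrak L_1}(y)))=\sigma_{\mathfrak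 L_0}^{l_1(y)}(h_{\mathfrak L}^{-1}(y))$ for all $x\in X_{\mathfrak L_0}$, $y\in X_{\mathfrak L_1}$. *)

theory Defs
  imports "HOL-Analysis.Analysis"
begin

definition occurs :: "'a list \<Rightarrow> (int \<Rightarrow> 'a) \<Rightarrow> bool" where
  "occurs w x \<longleftrightarrow> (\<exists>k::int. \<forall>i<length w. x (k + int i) = w ! i)"

definition Bstar :: "(int \<Rightarrow> 'a) set \<Rightarrow> 'a list set" where
  "Bstar \<Lambda> = {w. \<exists>x\<in>\<Lambda>. occurs w x}"

definition Bl :: "(int \<Rightarrow> 'a) set \<Rightarrow> nat \<Rightarrow> 'a list set" where
  "Bl \<Lambda> l = {w \<in> Bstar \<Lambda>. length w = l}"

definition XLam :: "(int \<Rightarrow> 'a) set \<Rightarrow> (nat \<Rightarrow> 'a) set" where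
  "XLam \<Lambda> = {(\<lambda>n. x (int n)) | x. x \<in> \<Lambda>}"

definition Gminus :: "(int \<Rightarrow> 'a) set \<Rightarrow> nat \<Rightarrow> 'a list \<Rightarrow> 'a list set" where
  "Gminus \<Lambda> l \<mu> = {\<nu> \<in> Bl \<Lambda> l. \<nu> @ \<mu> \<in> Bstar \<Lambda>}"

definition Gplus :: "(int \<Rightarrow> 'a) set \<Rightarrow> 'a list \<Rightarrow> 'a list set" where
  "Gplus \<Lambda> \<mu> = {\<nu>. \<mu> @ \<nu> \<in> Bstar \<Lambda>}"

definition Ssync :: "(int \<Rightarrow> 'a) set \<Rightarrow> nat \<Rightarrow> 'a list set" where
  "Ssync \<Lambda> l = {\<mu> \<in> Bstar \<Lambda>. \<forall>\<omega>\<in>Gplus \<Lambda> \<mu>. Gminus \<Lambda> l \<mu> = Gminus \<Lambda> l (\<mu> @ \<omega>)}"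

definition cls :: "(int \<Rightarrow> 'a) set \<Rightarrow> nat \<Rightarrow> 'a list \<Rightarrow> 'a list set" where
  "cls \<Lambda> l \<mu> = {\<nu> \<in> Ssync \<Lambda> l. Gminus \<Lambda> l \<nu> = Gminus \<Lambda> l \<mu>}"

text \<open>vertex set V_l = S_l(Lambda)/~_l  (for l = 0 this is the singleton {B_*(Lambda)})\<close>
definition Vset :: "(int \<Rightarrow> 'a) set \<Rightarrow> nat \<Rightarrow> 'a list set set" where
  "Vset \<Lambda> l = {cls \<Lambda> l \<mu> | \<mu>. \<mu> \<in> Ssync \<Lambda> l}"

definition iota_rel :: "(int \<Rightarrow> 'a) set \<Rightarrow> nat \<Rightarrow> 'a list set \<Rightarrow> 'a list set \<Rightarrow> bool" where
  "iota_rel \<Lambda> l U W \<longleftrightarrow> (\<exists>\<nu>\<in>Ssync \<Lambda> (Suc l). U = cls \<Lambda> (Suc l) \<nu> \<and> W = cls \<Lambda> l \<nu>)"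

definition edge :: "(int \<Rightarrow> 'a) set \<Rightarrow> nat \<Rightarrow> 'a list set \<Rightarrow> 'a \<Rightarrow> 'a list set \<Rightarrow> bool" where
  "edge \<Lambda> l U \<alpha> W \<longleftrightarrow>
     (\<exists>\<nu>\<in>Ssync \<Lambda> (Suc l). \<alpha> # \<nu> \<in> Bstar \<Lambda> \<and> U = cls \<Lambda> l (\<alpha> # \<nu>) \<and> W = cls \<Lambda> (Suc l) \<nu>)"

definition OmegaL :: "(int \<Rightarrow> 'a) set \<Rightarrow> (nat \<Rightarrow> 'a list set) set" where
  "OmegaL \<Lambda> = {u. (\<forall>l. u l \<in> Vset \<Lambda> l) \<and> (\<forall>l. iota_rel \<Lambda> l (u (Suc l)) (u l))}"

definition EL :: "(int \<Rightarrow> 'a) set \<Rightarrow> ((nat \<Rightarrow> 'a list set) \<times> 'a \<times> (nat \<Rightarrow> 'a list set)) set" where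
  "EL \<Lambda> = {(u, \<alpha>, w). u \<in> OmegaL \<Lambda> \<and> w \<in> OmegaL \<Lambda> \<and> (\<forall>l. edge \<Lambda> l (u l) \<alpha> (w (Suc l)))}"

text \<open>X_L; the sequence (alpha_i,u_i)_{i>=1} is stored as x with x n = (alpha_{n+1}, u_{n+1})\<close>
definition XL :: "(int \<Rightarrow> 'a) set \<Rightarrow> (nat \<Rightarrow> 'a \<times> (nat \<Rightarrow> 'a list set)) set" where
  "XL \<Lambda> = {x. \<exists>u0. (u0, fst (x 0), snd (x 0)) \<in> EL \<Lambda> \<and>
                 (\<forall>n. (snd (x n), fst (x (Suc n)), snd (x (Suc n))) \<in> EL \<Lambda>)}"

definition topXL :: "(int \<Rightarrow> 'a) set \<Rightarrow> (nat \<Rightarrow> 'a \<times> (nat \<Rightarrow> 'a list set)) topology" where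
  "topXL \<Lambda> = subtopology
     (product_topology (\<lambda>_. prod_topology (discrete_topology UNIV)
         (product_topology (\<lambda>_. discrete_topology UNIV) UNIV)) UNIV) (XL \<Lambda>)"

definition topXLam :: "(int \<Rightarrow> 'a) set \<Rightarrow> (nat \<Rightarrow> 'a) topology" where
  "topXLam \<Lambda> = subtopology (product_topology (\<lambda>_. discrete_topology UNIV) UNIV) (XLam \<Lambda>)"

definition shiftn :: "nat \<Rightarrow> (nat \<Rightarrow> 'b) \<Rightarrow> (nat \<Rightarrow> 'b)" where
  "shiftn k x = (\<lambda>n. x (n + k))"

definition piL :: "(nat \<Rightarrow> 'a \<times> 'c) \<Rightarrow> (nat \<Rightarrow> 'a)" where
  "piL x = (\<lambda>n. fst (x n))"

definition coe :: "(int \<Rightarrow> 'a) set \<Rightarrow> (int \<Rightarrow> 'b) set \<Rightarrow> bool" where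
  "coe \<Lambda>0 \<Lambda>1 \<longleftrightarrow>
    (\<exists>hL hLinv hLam k0 l0 k1 l1.
       homeomorphic_maps (topXL \<Lambda>0) (topXL \<Lambda>1) hL hLinv \<and>
       homeomorphic_map (topXLam \<Lambda>0) (topXLam \<Lambda>1) hLam \<and>
       continuous_map (topXL \<Lambda>0) (discrete_topology (UNIV::nat set)) k0 \<and>
       continuous_map (topXL \<Lambda>0) (discrete_topology (UNIV::nat set)) l0 \<and>
       continuous_map (topXL \<Lambda>1) (discrete_topology (UNIV::nat set)) k1 \<and>
       continuous_map (topXL \<Lambda>1) (discrete_topology (UNIV::nat set)) l1 \<and>
       (\<forall>x\<in>XL \<Lambda>0. piL (hL x) = hLam (piL x)) \<and>
       (\<forall>x\<in>XL \<Lambda>0. shiftn (k0 x) (hL (shiftn 1 x)) = shiftn (l0 x) (hL x)) \<and>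
       (\<forall>y\<in>XL \<Lambda>1. shiftn (k1 y) (hLinv (shiftn 1 y)) = shiftn (l1 y) (hLinv y)))"

section \<open>Even and odd shifts over {0,1} (0 = False, 1 = True)\<close>

definition even_shift :: "(int \<Rightarrow> bool) set" where
  "even_shift = {x. \<forall>n::nat. \<not> occurs (True # replicate (2*n+1) False @ [True]) x}"

definition odd_shift :: "(int \<Rightarrow> bool) set" where
  "odd_shift = {x. \<forall>n::nat. \<not> occurs (True # replicate (2*n) False @ [True]) x}"

end

theory Submission
  imports Defs
begin

text \<open>Both shifts are presented by one labelled graph on two states, a state being the parity
  of the number of leading zeros of what may follow: a label 0 flips the state, and a label 1 is
  only possible from state False and enters state \<open>\<not> q\<close>, where q is the parity of the
  forbidden gaps. At every level l > 0 the minimal presentation has exactly these two vertices,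
  so X_L is the space of labelled paths of this graph. The substitution \<open>1 \<mapsto> 10\<close>
  turns even gaps into odd ones; lifted to paths it is a bijection from the paths of the even
  graph onto those of the odd graph, each output coordinate of it and of its inverse depending on
  finitely many input coordinates, hence a homeomorphism. It maps the shift of a path to the shift
  of the image by one or two steps, according to the first label, which gives the cocycles.\<close>

section \<open>Even and odd shift as gap shifts\<close>

definition gap_word :: "nat \<Rightarrow> bool list" where
  "gap_word m = True # replicate m False @ [True]"

definition gap_shift :: "bool \<Rightarrow> (int \<Rightarrow> bool) set" where
  "gap_shift q = {x. \<forall>m. odd m = q \<longrightarrow> \<not> occurs (gap_word m) x}"

lemma even_shift_eq_gap_shift: "even_shift = gap_shift True"
  unfolding even_shift_def gap_shift_def gap_word_def[symmetric] by (auto elim!: oddE)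

lemma odd_shift_eq_gap_shift: "odd_shift = gap_shift False"
  unfolding odd_shift_def gap_shift_def gap_word_def[symmetric] by (auto elim!: evenE)

definition gap :: "('i::semiring_1 \<Rightarrow> bool) \<Rightarrow> 'i \<Rightarrow> nat \<Rightarrow> bool" where
  "gap x i m \<longleftrightarrow> x i \<and> x (i + of_nat m + 1) \<and> (\<forall>j<m. \<not> x (i + of_nat j + 1))"

lemma occurs_gap_word: "occurs (gap_word m) x \<longleftrightarrow> (\<exists>k. gap x k m)"
proof -
  have nth: "gap_word m ! t = (t = 0 \<or> t = m + 1)" if "t < m + 2" for t
    using that unfolding gap_word_def by (cases t) (auto simp: nth_append)
  have "(\<forall>t<m + 2. x (k + int t) = gap_word m ! t) \<longleftrightarrow> gap x k m" for k
  proof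
    assume h: "\<forall>t<m + 2. x (k + int t) = gap_word m ! t"
    have "x k" using h[rule_format, of 0] nth[of 0] by simp
    moreover have "x (k + int m + 1)" using h[rule_format, of "m + 1"] nth[of "m + 1"]
      by (simp add: ac_simps)
    moreover have "\<not> x (k + int j + 1)" if "j < m" for j
      using that h[rule_format, of "j + 1"] nth[of "j + 1"] by (simp add: ac_simps)
    ultimately show "gap x k m" unfolding gap_def by simp
  next
    assume gap: "gap x k m"
    show "\<forall>t<m + 2. x (k + int t) = gap_word m ! t"
    proof (intro allI impI)
      fix t assume "t < m + 2"
      then show "x (k + int t) = gap_word m ! t"
        using gap nth unfolding gap_def by (cases t) (auto simp: ac_simps less_Suc_eq)
    qed
  qed
  then show ?thesis unfolding occurs_def by (simp add: gap_word_def)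
qed

lemma gap_shift_iff: "x \<in> gap_shift q \<longleftrightarrow> (\<forall>k m. gap x k m \<longrightarrow> odd m \<noteq> q)"
  unfolding gap_shift_def occurs_gap_word by blast

lemma gap_cong:
  assumes "\<And>j. j \<le> m + 1 \<Longrightarrow> x (i + of_nat j) = y (i + of_nat j)"
  shows "gap x i m \<longleftrightarrow> gap y i m"
proof -
  have "x i = y i" using assms[of 0] by simp
  moreover have "x (i + of_nat m + 1) = y (i + of_nat m + 1)"
    using assms[of "m + 1"] by (simp add: ac_simps)
  moreover have "x (i + of_nat j + 1) = y (i + of_nat j + 1)" if "j < m" for j
    using that assms[of "j + 1"] by (simp add: ac_simps)
  ultimately show ?thesis unfolding gap_def by auto
qed

lemma gap_reindex: "gap (\<lambda>n. x (k + of_nat n)) i m \<longleftrightarrow> gap x (k + of_nat i) m"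
  unfolding gap_def by (simp add: ac_simps)

lemma gap_zero_extension:
  "gap (\<lambda>n::int. 0 \<le> n \<and> a (nat n)) k m \<longleftrightarrow> 0 \<le> k \<and> gap a (nat k) m"
proof (cases "0 \<le> k")
  case True
  then obtain n where "k = int n" by (metis nonneg_int_cases)
  then show ?thesis unfolding gap_def by (simp add: nat_add_distrib)
qed (simp add: gap_def)

definition admissible_seq :: "bool \<Rightarrow> (nat \<Rightarrow> bool) \<Rightarrow> bool" where
  "admissible_seq q a \<longleftrightarrow> (\<forall>i m. gap a i m \<longrightarrow> odd m \<noteq> q)"

definition zero_pad :: "bool list \<Rightarrow> nat \<Rightarrow> bool" where
  "zero_pad w i \<longleftrightarrow> i < length w \<and> w ! i"

definition admissible_word :: "bool \<Rightarrow> bool list \<Rightarrow> bool" where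
  "admissible_word q w \<longleftrightarrow> admissible_seq q (zero_pad w)"

lemma gap_zero_pad_less: "gap (zero_pad w) i m \<Longrightarrow> i + m + 1 < length w"
  unfolding gap_def zero_pad_def by simp

lemma XLam_gap_shift: "XLam (gap_shift q) = {a. admissible_seq q a}"
proof (intro set_eqI iffI)
  fix a assume "a \<in> XLam (gap_shift q)"
  then obtain x where x: "x \<in> gap_shift q" and a: "a = (\<lambda>n. x (int n))" unfolding XLam_def by blast
  have "gap a i m \<longleftrightarrow> gap x (int i) m" for i m
    using gap_reindex[of x 0 i m] by (simp add: a)
  then show "a \<in> {a. admissible_seq q a}"
    using x unfolding gap_shift_iff admissible_seq_def by simp
next
  fix a assume "a \<in> {a. admissible_seq q a}"
  then have "(\<lambda>n::int. 0 \<le> n \<and> a (nat n)) \<in> gap_shift q"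
    unfolding gap_shift_iff gap_zero_extension admissible_seq_def by auto
  then show "a \<in> XLam (gap_shift q)"
    unfolding XLam_def mem_Collect_eq by (intro exI[of _ "\<lambda>n::int. 0 \<le> n \<and> a (nat n)"]) simp
qed

lemma Bstar_gap_shift: "Bstar (gap_shift q) = {w. admissible_word q w}"
proof (intro set_eqI iffI)
  fix w assume "w \<in> Bstar (gap_shift q)"
  then obtain x k where x: "x \<in> gap_shift q" and k: "\<forall>i<length w. x (k + int i) = w ! i"
    unfolding Bstar_def occurs_def by blast
  have "odd m \<noteq> q" if gap: "gap (zero_pad w) i m" for i m
  proof -
    have "i + m + 1 < length w" using gap_zero_pad_less[OF gap] .
    then have "gap (\<lambda>n. x (k + int n)) i m \<longleftrightarrow> gap (zero_pad w) i m"
      by (intro gap_cong) (simp add: k zero_pad_def flip: of_nat_add)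
    then have "gap x (k + int i) m" using gap gap_reindex[of x k i m] by simp
    then show ?thesis using x unfolding gap_shift_iff by blast
  qed
  then show "w \<in> {w. admissible_word q w}" unfolding admissible_word_def admissible_seq_def by blast
next
  fix w assume "w \<in> {w. admissible_word q w}"
  then have "(\<lambda>n::int. 0 \<le> n \<and> zero_pad w (nat n)) \<in> gap_shift q"
    unfolding gap_shift_iff gap_zero_extension admissible_word_def admissible_seq_def by auto
  moreover have "occurs w (\<lambda>n::int. 0 \<le> n \<and> zero_pad w (nat n))"
    unfolding occurs_def zero_pad_def by (intro exI[of _ 0]) simp
  ultimately show "w \<in> Bstar (gap_shift q)" unfolding Bstar_def by blast
qed

section \<open>Concatenation of admissible words\<close>

fun lead0 :: "bool list \<Rightarrow> nat" where
  "lead0 [] = 0"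
| "lead0 (a # w) = (if a then 0 else Suc (lead0 w))"

definition trail0 :: "bool list \<Rightarrow> nat" where
  "trail0 w = lead0 (rev w)"

definition has_one :: "bool list \<Rightarrow> bool" where
  "has_one w \<longleftrightarrow> True \<in> set w"

lemma has_one_simps [simp]:
  "\<not> has_one []" "has_one (a # w) \<longleftrightarrow> a \<or> has_one w"
  "has_one (v @ w) \<longleftrightarrow> has_one v \<or> has_one w" "has_one (rev w) \<longleftrightarrow> has_one w"
  "\<not> has_one (replicate n False)"
  by (auto simp: has_one_def)

lemma lead0_no_one: "\<not> has_one w \<Longrightarrow> lead0 w = length w"
  by (induction w) auto

lemma lead0_append: "lead0 (v @ w) = (if has_one v then lead0 v else length v + lead0 w)"
  by (induction v) auto

lemma trail0_Cons:
  "trail0 (a # w) = (if has_one w then trail0 w else if a then length w else Suc (length w))"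
  unfolding trail0_def by (simp add: lead0_append lead0_no_one)

lemma gap_Cons_Suc: "gap (case_nat b a) (Suc i) m \<longleftrightarrow> gap a i m"
  unfolding gap_def by simp

lemma gap_Cons_0: "gap (case_nat b a) 0 m \<longleftrightarrow> b \<and> a m \<and> (\<forall>j<m. \<not> a j)"
  unfolding gap_def by simp

lemma admissible_seq_Cons:
  "admissible_seq q (case_nat b a) \<longleftrightarrow>
     admissible_seq q a \<and> (\<forall>m. b \<and> a m \<and> (\<forall>j<m. \<not> a j) \<longrightarrow> odd m \<noteq> q)"
proof
  assume "admissible_seq q (case_nat b a)"
  then show "admissible_seq q a \<and> (\<forall>m. b \<and> a m \<and> (\<forall>j<m. \<not> a j) \<longrightarrow> odd m \<noteq> q)"
    unfolding admissible_seq_def by (metis gap_Cons_0 gap_Cons_Suc)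
next
  assume "admissible_seq q a \<and> (\<forall>m. b \<and> a m \<and> (\<forall>j<m. \<not> a j) \<longrightarrow> odd m \<noteq> q)"
  then show "admissible_seq q (case_nat b a)"
    unfolding admissible_seq_def by (metis gap_Cons_0 gap_Cons_Suc nat.exhaust)
qed

lemma zero_pad_Cons: "zero_pad (b # w) = case_nat b (zero_pad w)"
  by (auto simp: fun_eq_iff zero_pad_def split: nat.split)

lemma zero_pad_first_one: "zero_pad w m \<and> (\<forall>j<m. \<not> zero_pad w j) \<longleftrightarrow> has_one w \<and> lead0 w = m"
proof (induction w arbitrary: m)
  case (Cons a w)
  then show ?case by (cases m) (auto simp: zero_pad_Cons All_less_Suc2)
qed (simp add: zero_pad_def)

lemma admissible_word_Nil: "admissible_word q []"
  unfolding admissible_word_def admissible_seq_def gap_def zero_pad_def by simp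

lemma admissible_word_Cons:
  "admissible_word q (b # w) \<longleftrightarrow> admissible_word q w \<and> (b \<and> has_one w \<longrightarrow> odd (lead0 w) \<noteq> q)"
  unfolding admissible_word_def zero_pad_Cons admissible_seq_Cons
  by (simp add: zero_pad_first_one)

lemma admissible_word_append:
  "admissible_word q (v @ w) \<longleftrightarrow> admissible_word q v \<and> admissible_word q w \<and>
     (has_one v \<and> has_one w \<longrightarrow> odd (trail0 v + lead0 w) \<noteq> q)"
proof (induction v)
  case Nil
  then show ?case by (simp add: admissible_word_Nil)
next
  case (Cons b v)
  then show ?case
    by (cases "has_one v") (auto simp: admissible_word_Cons lead0_append lead0_no_one trail0_Cons)
qed

lemma admissible_word_replicate_one: "admissible_word q (replicate n False @ [True])"
  by (induction n) (simp_all add: admissible_word_Cons admissible_word_Nil)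

section \<open>The minimal presentation\<close>

definition preceders :: "bool \<Rightarrow> nat \<Rightarrow> bool \<Rightarrow> bool list set" where
  "preceders q l p =
     {v. admissible_word q v \<and> length v = l \<and> (has_one v \<longrightarrow> (odd (trail0 v) \<noteq> p) \<noteq> q)}"

definition parity_class :: "bool \<Rightarrow> bool \<Rightarrow> bool list set" where
  "parity_class q p = {v. admissible_word q v \<and> has_one v \<and> odd (lead0 v) = p}"

definition parity_word :: "bool \<Rightarrow> bool list" where
  "parity_word p = (if p then [False, True] else [True])"

lemma parity_word:
  "admissible_word q (parity_word p)" "has_one (parity_word p)" "odd (lead0 (parity_word p)) = p"
  by (simp_all add: parity_word_def admissible_word_Cons admissible_word_Nil)

lemma parity_class_eq_iff [simp]: "parity_class q a = parity_class q b \<longleftrightarrow> a = b"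
  using parity_word(1)[of q a] parity_word(2,3)[of a] unfolding parity_class_def by blast

lemma Bl_gap_shift: "Bl (gap_shift q) l = {w. admissible_word q w \<and> length w = l}"
  unfolding Bl_def Bstar_gap_shift by auto

lemma Gminus_gap_shift:
  "Gminus (gap_shift q) l u = {v. admissible_word q v \<and> length v = l \<and> admissible_word q (v @ u)}"
  unfolding Gminus_def Bl_gap_shift Bstar_gap_shift by auto

lemma Gplus_gap_shift: "Gplus (gap_shift q) u = {w. admissible_word q (u @ w)}"
  unfolding Gplus_def Bstar_gap_shift by auto

lemma Gminus_has_one:
  "admissible_word q u \<Longrightarrow> has_one u \<Longrightarrow> Gminus (gap_shift q) l u = preceders q l (odd (lead0 u))"
  unfolding Gminus_gap_shift preceders_def admissible_word_append by auto

lemma Gminus_no_one: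
  "admissible_word q u \<Longrightarrow> \<not> has_one u \<Longrightarrow> Gminus (gap_shift q) l u = Bl (gap_shift q) l"
  unfolding Gminus_gap_shift Bl_gap_shift admissible_word_append by auto

lemma last_one_in_preceders:
  "0 < l \<Longrightarrow> replicate (l - 1) False @ [True] \<in> preceders q l p \<longleftrightarrow> p \<noteq> q"
  unfolding preceders_def trail0_def using admissible_word_replicate_one by auto

lemma preceders_eq_iff: "0 < l \<Longrightarrow> preceders q l a = preceders q l b \<longleftrightarrow> a = b"
  using last_one_in_preceders[of l q a] last_one_in_preceders[of l q b] by auto

lemma Ssync_gap_shift: "0 < l \<Longrightarrow> Ssync (gap_shift q) l = {u. admissible_word q u \<and> has_one u}"
proof (intro set_eqI iffI)
  fix u assume l: "0 < l" and "u \<in> Ssync (gap_shift q) l"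
  then have adm: "admissible_word q u"
    and sync: "\<And>w. admissible_word q (u @ w) \<Longrightarrow>
      Gminus (gap_shift q) l u = Gminus (gap_shift q) l (u @ w)"
    unfolding Ssync_def Bstar_gap_shift Gplus_gap_shift by auto
  have "has_one u"
  proof (rule ccontr)
    assume no_one: "\<not> has_one u"
    \<comment> \<open>appending w forbids the predecessor \<open>0^(l-1) 1\<close>, which u alone admits\<close>
    define w where "w = replicate (if odd (length u) = q then 0 else 1) False @ [True]"
    have adm_uw: "admissible_word q (u @ w)" and has_one_uw: "has_one (u @ w)"
      using adm no_one admissible_word_replicate_one
      unfolding w_def admissible_word_append by auto
    have "odd (lead0 (u @ w)) = q"
      using no_one unfolding w_def by (auto simp: lead0_append lead0_no_one)
    then have "Bl (gap_shift q) l = preceders q l q"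
      using sync[OF adm_uw] Gminus_no_one[OF adm no_one] Gminus_has_one[OF adm_uw has_one_uw]
      by simp
    then show False
      using l last_one_in_preceders[OF l, of q q] admissible_word_replicate_one
      by (auto simp: Bl_gap_shift)
  qed
  with adm show "u \<in> {u. admissible_word q u \<and> has_one u}" by simp
next
  fix u assume l: "0 < l" and "u \<in> {u. admissible_word q u \<and> has_one u}"
  then have adm: "admissible_word q u" and one: "has_one u" by auto
  have "Gminus (gap_shift q) l u = Gminus (gap_shift q) l (u @ w)"
    if "admissible_word q (u @ w)" for w
    using Gminus_has_one[OF adm one] Gminus_has_one[OF that] one by (simp add: lead0_append)
  with adm show "u \<in> Ssync (gap_shift q) l"
    unfolding Ssync_def Bstar_gap_shift Gplus_gap_shift by simp
qed

lemma Gminus_gap_shift_0: "Gminus (gap_shift q) 0 u = (if admissible_word q u then {[]} else {})"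
  unfolding Gminus_gap_shift by (auto simp: admissible_word_Nil)

lemma Ssync_gap_shift_0: "Ssync (gap_shift q) 0 = {u. admissible_word q u}"
  unfolding Ssync_def Bstar_gap_shift Gplus_gap_shift Gminus_gap_shift_0
  by (auto simp: admissible_word_append)

lemma cls_gap_shift:
  assumes "0 < l" "admissible_word q u" "has_one u"
  shows "cls (gap_shift q) l u = parity_class q (odd (lead0 u))"
  unfolding cls_def Ssync_gap_shift[OF assms(1)] parity_class_def
  using Gminus_has_one[OF assms(2,3)] Gminus_has_one[of q _ l] preceders_eq_iff[OF assms(1)]
  by auto

lemma cls_gap_shift_0: "admissible_word q u \<Longrightarrow> cls (gap_shift q) 0 u = {v. admissible_word q v}"
  unfolding cls_def Ssync_gap_shift_0 Gminus_gap_shift_0 by auto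

lemma Vset_gap_shift_0: "Vset (gap_shift q) 0 = {{v. admissible_word q v}}"
  unfolding Vset_def Ssync_gap_shift_0 using cls_gap_shift_0 admissible_word_Nil by blast

lemma Vset_gap_shift:
  assumes "0 < l"
  shows "Vset (gap_shift q) l = range (parity_class q)"
  unfolding Vset_def Ssync_gap_shift[OF assms]
proof (intro set_eqI iffI)
  fix U assume "U \<in> {cls (gap_shift q) l \<mu> |\<mu>. \<mu> \<in> {u. admissible_word q u \<and> has_one u}}"
  then show "U \<in> range (parity_class q)" using cls_gap_shift[OF assms] by auto
next
  fix U assume "U \<in> range (parity_class q)"
  then obtain p where "U = cls (gap_shift q) l (parity_word p)"
    using cls_gap_shift[OF assms] parity_word(1)[of q] parity_word(2,3) by auto
  then show "U \<in> {cls (gap_shift q) l \<mu> |\<mu>. \<mu> \<in> {u. admissible_word q u \<and> has_one u}}"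
    using parity_word(1)[of q] parity_word(2) by blast
qed

definition omega_point :: "bool \<Rightarrow> bool \<Rightarrow> nat \<Rightarrow> bool list set" where
  "omega_point q p l = (if l = 0 then {v. admissible_word q v} else parity_class q p)"

lemma omega_point_Suc: "omega_point q p (Suc l) = parity_class q p"
  by (simp add: omega_point_def)

lemma omega_point_eq_iff [simp]: "omega_point q a = omega_point q b \<longleftrightarrow> a = b"
proof
  assume "omega_point q a = omega_point q b"
  then have "omega_point q a 1 = omega_point q b 1" by simp
  then show "a = b" by (simp add: omega_point_def)
qed simp

lemma cls_omega_point:
  "admissible_word q u \<Longrightarrow> has_one u \<Longrightarrow> cls (gap_shift q) l u = omega_point q (odd (lead0 u)) l"
  by (cases l) (simp_all add: omega_point_def cls_gap_shift cls_gap_shift_0)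

lemma OmegaL_gap_shift: "OmegaL (gap_shift q) = range (omega_point q)"
proof (intro set_eqI iffI)
  fix u assume "u \<in> OmegaL (gap_shift q)"
  then have V: "\<And>l. u l \<in> Vset (gap_shift q) l"
    and iota: "\<And>l. iota_rel (gap_shift q) l (u (Suc l)) (u l)"
    unfolding OmegaL_def by auto
  obtain p where p: "u 1 = parity_class q p" using V[of 1] Vset_gap_shift[of 1 q] by auto
  have "u (Suc l) = parity_class q p" for l
  proof (induction l)
    case 0
    then show ?case using p by simp
  next
    case (Suc l)
    obtain v where "v \<in> Ssync (gap_shift q) (Suc (Suc l))"
      "u (Suc (Suc l)) = cls (gap_shift q) (Suc (Suc l)) v"
      "u (Suc l) = cls (gap_shift q) (Suc l) v"
      using iota[of "Suc l"] unfolding iota_rel_def by blast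
    then show ?case using Suc.IH Ssync_gap_shift[of "Suc (Suc l)" q] cls_omega_point
      by (simp add: omega_point_Suc)
  qed
  moreover have "u 0 = {v. admissible_word q v}" using V[of 0] Vset_gap_shift_0 by auto
  ultimately have "u = omega_point q p" by (auto simp: fun_eq_iff omega_point_def gr0_conv_Suc)
  then show "u \<in> range (omega_point q)" by simp
next
  fix u assume "u \<in> range (omega_point q)"
  then obtain p where u: "u = omega_point q p" by blast
  have "omega_point q p l \<in> Vset (gap_shift q) l" for l
    by (cases l) (simp_all add: Vset_gap_shift_0 Vset_gap_shift omega_point_def)
  moreover have "iota_rel (gap_shift q) l (omega_point q p (Suc l)) (omega_point q p l)" for l
    unfolding iota_rel_def Ssync_gap_shift[OF zero_less_Suc]
    using cls_omega_point parity_word(1)[of q p] parity_word(2,3)[of p]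
    by (intro bexI[of _ "parity_word p"]) auto
  ultimately show "u \<in> OmegaL (gap_shift q)" unfolding OmegaL_def u by blast
qed

definition graph_edge :: "bool \<Rightarrow> bool \<Rightarrow> bool \<Rightarrow> bool \<Rightarrow> bool" where
  "graph_edge q p a p' \<longleftrightarrow> (if a then \<not> p \<and> p' = (\<not> q) else p = (\<not> p'))"

lemma graph_edge_iff_word:
  "graph_edge q p a p' \<longleftrightarrow>
     (\<exists>v. admissible_word q (a # v) \<and> has_one v \<and> p = odd (lead0 (a # v)) \<and> p' = odd (lead0 v))"
proof
  assume "graph_edge q p a p'"
  then show "\<exists>v. admissible_word q (a # v) \<and> has_one v \<and>
      p = odd (lead0 (a # v)) \<and> p' = odd (lead0 v)"
    using parity_word(1)[of q p'] parity_word(2,3)[of p']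
    by (intro exI[of _ "parity_word p'"]) (auto simp: graph_edge_def admissible_word_Cons)
qed (auto simp: graph_edge_def admissible_word_Cons)

lemma edge_gap_shift:
  "edge (gap_shift q) l U a W \<longleftrightarrow>
     (\<exists>v. admissible_word q (a # v) \<and> has_one v \<and>
        U = omega_point q (odd (lead0 (a # v))) l \<and> W = omega_point q (odd (lead0 v)) (Suc l))"
proof -
  have "v \<in> Ssync (gap_shift q) (Suc l) \<and> a # v \<in> Bstar (gap_shift q) \<longleftrightarrow>
      admissible_word q (a # v) \<and> has_one v" for v
    unfolding Ssync_gap_shift[OF zero_less_Suc] Bstar_gap_shift by (auto simp: admissible_word_Cons)
  moreover have "cls (gap_shift q) l (a # v) = omega_point q (odd (lead0 (a # v))) l"
    and "cls (gap_shift q) (Suc l) v = omega_point q (odd (lead0 v)) (Suc l)"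
    if "admissible_word q (a # v)" "has_one v" for v
    using that cls_omega_point by (simp_all add: admissible_word_Cons)
  ultimately show ?thesis unfolding edge_def by blast
qed

lemma EL_omega_point:
  "(omega_point q p, a, omega_point q p') \<in> EL (gap_shift q) \<longleftrightarrow> graph_edge q p a p'"
proof
  assume "(omega_point q p, a, omega_point q p') \<in> EL (gap_shift q)"
  then have "edge (gap_shift q) 1 (omega_point q p 1) a (omega_point q p' (Suc 1))"
    unfolding EL_def by simp
  then show "graph_edge q p a p'"
    unfolding edge_gap_shift graph_edge_iff_word One_nat_def omega_point_Suc by auto
next
  assume "graph_edge q p a p'"
  then have "edge (gap_shift q) l (omega_point q p l) a (omega_point q p' (Suc l))" for l
    unfolding edge_gap_shift graph_edge_iff_word by auto
  then show "(omega_point q p, a, omega_point q p') \<in> EL (gap_shift q)"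
    unfolding EL_def OmegaL_gap_shift by auto
qed

lemma EL_gap_shift:
  "(u, a, w) \<in> EL (gap_shift q) \<longleftrightarrow>
     (\<exists>p p'. u = omega_point q p \<and> w = omega_point q p' \<and> graph_edge q p a p')"
proof
  assume uw: "(u, a, w) \<in> EL (gap_shift q)"
  then have "u \<in> range (omega_point q)" "w \<in> range (omega_point q)"
    unfolding EL_def OmegaL_gap_shift by auto
  with uw show "\<exists>p p'. u = omega_point q p \<and> w = omega_point q p' \<and> graph_edge q p a p'"
    using EL_omega_point by blast
qed (use EL_omega_point in blast)

section \<open>Paths of the presentation\<close>

lemma shiftn_apply: "shiftn k x n = x (n + k)"
  by (simp add: shiftn_def)

lemma shiftn_shiftn [simp]: "shiftn a (shiftn b x) = shiftn (a + b) x"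
  by (simp add: shiftn_def fun_eq_iff add.assoc)

lemma shiftn_0 [simp]: "shiftn 0 x = x"
  by (simp add: shiftn_def)

lemma shift_induct:
  assumes "w \<in> S"
    and step: "\<And>w. w \<in> S \<Longrightarrow>
      \<exists>c>0. (\<forall>n<c. P w n) \<and> shiftn c w \<in> S \<and> (\<forall>n. P (shiftn c w) n \<longrightarrow> P w (n + c))"
  shows "P w n"
  using assms(1)
proof (induction n arbitrary: w rule: less_induct)
  case (less n)
  obtain c where c: "c > 0" "\<forall>n<c. P w n" "shiftn c w \<in> S" "\<forall>n. P (shiftn c w) n \<longrightarrow> P w (n + c)"
    using step[OF less.prems] by blast
  show ?case
  proof (cases "n < c")
    case False
    then have "P (shiftn c w) (n - c)" using less.IH[of "n - c"] c by simp
    then show ?thesis using c False by (metis le_add_diff_inverse2 not_less)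
  qed (use c in blast)
qed

definition graph_paths :: "bool \<Rightarrow> (nat \<Rightarrow> bool \<times> bool) set" where
  "graph_paths q = {z. (\<exists>p. graph_edge q p (fst (z 0)) (snd (z 0))) \<and>
     (\<forall>n. graph_edge q (snd (z n)) (fst (z (Suc n))) (snd (z (Suc n))))}"

lemma graph_paths_shift: "z \<in> graph_paths q \<Longrightarrow> shiftn k z \<in> graph_paths q"
  unfolding graph_paths_def shiftn_apply by (cases k) auto

lemma graph_paths_start_one: "z \<in> graph_paths q \<Longrightarrow> fst (z 0) \<Longrightarrow> snd (z 0) = (\<not> q)"
  unfolding graph_paths_def graph_edge_def by auto

lemma graph_paths_step:
  "z \<in> graph_paths q \<Longrightarrow> graph_edge q (snd (z n)) (fst (z (Suc n))) (snd (z (Suc n)))"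
  unfolding graph_paths_def by blast

lemma graph_paths_step_one:
  "z \<in> graph_paths q \<Longrightarrow> fst (z (Suc n)) \<Longrightarrow> \<not> snd (z n) \<and> snd (z (Suc n)) = (\<not> q)"
  using graph_paths_step[of z q n] by (simp add: graph_edge_def)

lemma graph_paths_step_zero:
  "z \<in> graph_paths q \<Longrightarrow> \<not> fst (z (Suc n)) \<Longrightarrow> snd (z n) = (\<not> snd (z (Suc n)))"
  using graph_paths_step[of z q n] by (simp add: graph_edge_def)

type_synonym XL_point = "nat \<Rightarrow> bool \<times> (nat \<Rightarrow> bool list set)"

definition encode_path :: "bool \<Rightarrow> (nat \<Rightarrow> bool \<times> bool) \<Rightarrow> XL_point" where
  "encode_path q z = (\<lambda>n. (fst (z n), omega_point q (snd (z n))))"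

definition decode_path :: "bool \<Rightarrow> XL_point \<Rightarrow> nat \<Rightarrow> bool \<times> bool" where
  "decode_path q x = (\<lambda>n. (fst (x n), snd (x n) 1 = parity_class q True))"

lemma snd_decode_path: "snd (x n) = omega_point q p \<Longrightarrow> snd (decode_path q x n) = p"
  by (simp add: decode_path_def omega_point_def)

lemma fst_decode_path: "fst (decode_path q x n) = fst (x n)"
  by (simp add: decode_path_def)

lemma decode_encode_path [simp]: "decode_path q (encode_path q z) = z"
  by (simp add: fun_eq_iff prod_eq_iff encode_path_def snd_decode_path) (simp add: decode_path_def)

lemma decode_path_shiftn: "decode_path q (shiftn k x) = shiftn k (decode_path q x)"
  by (simp add: decode_path_def shiftn_def)

lemma encode_path_shiftn: "encode_path q (shiftn k z) = shiftn k (encode_path q z)"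
  by (simp add: encode_path_def shiftn_def)

lemma XL_gap_shift: "XL (gap_shift q) = encode_path q ` graph_paths q"
proof (intro set_eqI iffI)
  fix x assume "x \<in> XL (gap_shift q)"
  then obtain u0 where start: "(u0, fst (x 0), snd (x 0)) \<in> EL (gap_shift q)"
    and step: "\<And>n. (snd (x n), fst (x (Suc n)), snd (x (Suc n))) \<in> EL (gap_shift q)"
    unfolding XL_def by blast
  define z where "z = decode_path q x"
  have fst_z: "fst (z n) = fst (x n)" for n
    unfolding z_def by (rule fst_decode_path)
  have x_n: "snd (x n) = omega_point q (snd (z n))" for n
  proof -
    obtain p where "snd (x n) = omega_point q p" using step[of n] unfolding EL_gap_shift by blast
    moreover from this have "snd (z n) = p" unfolding z_def by (rule snd_decode_path)
    ultimately show ?thesis by simp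
  qed
  then have "x = encode_path q z"
    by (simp add: fun_eq_iff prod_eq_iff encode_path_def fst_z)
  moreover have "z \<in> graph_paths q"
    unfolding graph_paths_def
  proof (intro CollectI conjI allI)
    show "\<exists>p. graph_edge q p (fst (z 0)) (snd (z 0))"
      using start unfolding EL_gap_shift x_n fst_z omega_point_eq_iff by blast
    show "graph_edge q (snd (z n)) (fst (z (Suc n))) (snd (z (Suc n)))" for n
      using step[of n] unfolding EL_gap_shift x_n fst_z omega_point_eq_iff by blast
  qed
  ultimately show "x \<in> encode_path q ` graph_paths q" by blast
next
  fix x assume "x \<in> encode_path q ` graph_paths q"
  then obtain z where z: "z \<in> graph_paths q" and x: "x = encode_path q z" by blast
  then obtain p where "graph_edge q p (fst (z 0)) (snd (z 0))" unfolding graph_paths_def by blast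
  then have "(omega_point q p, fst (x 0), snd (x 0)) \<in> EL (gap_shift q)"
    unfolding x encode_path_def by (simp add: EL_omega_point)
  moreover have "(snd (x n), fst (x (Suc n)), snd (x (Suc n))) \<in> EL (gap_shift q)" for n
    using z unfolding x encode_path_def graph_paths_def by (simp add: EL_omega_point)
  ultimately show "x \<in> XL (gap_shift q)" unfolding XL_def by blast
qed

lemma XL_gap_shift_decode:
  "x \<in> XL (gap_shift q) \<Longrightarrow> decode_path q x \<in> graph_paths q \<and> encode_path q (decode_path q x) = x"
  unfolding XL_gap_shift by auto

lemma admissible_path_labels:
  assumes z: "z \<in> graph_paths q"
  shows "admissible_seq q (\<lambda>n. fst (z n))"
  unfolding admissible_seq_def
proof (intro allI impI notI)
  fix i m assume "gap (\<lambda>n. fst (z n)) i m" and q: "odd m = q"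
  then have one_i: "fst (z i)" and one_next: "fst (z (Suc (i + m)))"
    and zeros: "\<And>j. j < m \<Longrightarrow> \<not> fst (z (Suc (i + j)))"
    unfolding gap_def by auto
  have "snd (z i) = (\<not> q)"
    using one_i graph_paths_start_one[OF z] graph_paths_step_one[OF z] by (cases i) auto
  then have "snd (z (i + d)) = ((\<not> q) \<noteq> odd d)" if "d \<le> m" for d
    using that by (induction d) (auto simp: graph_paths_step_zero[OF z] zeros)
  moreover have "\<not> snd (z (i + m))" using graph_paths_step_one[OF z one_next] by simp
  ultimately show False using q by auto
qed

lemma last_true_upto: "a j \<Longrightarrow> j \<le> (n::nat) \<Longrightarrow> \<exists>i\<le>n. a i \<and> (\<forall>k. i < k \<and> k \<le> n \<longrightarrow> \<not> a k)"
proof (induction n)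
  case (Suc n)
  show ?case
  proof (cases "a (Suc n)")
    case False
    with Suc.prems have "j \<le> n" by (auto simp: le_Suc_eq)
    then obtain i where "i \<le> n" "a i" "\<forall>k. i < k \<and> k \<le> n \<longrightarrow> \<not> a k"
      using Suc.IH Suc.prems(1) by blast
    with False have "i \<le> Suc n \<and> a i \<and> (\<forall>k. i < k \<and> k \<le> Suc n \<longrightarrow> \<not> a k)"
      by (auto simp: le_Suc_eq)
    then show ?thesis by blast
  qed auto
qed auto

lemma admissible_seq_path:
  assumes adm: "admissible_seq q a"
  shows "\<exists>s. (\<lambda>n. (a n, s n)) \<in> graph_paths q"
proof -
  \<comment> \<open>chosen so that the state just before the first 1 is False\<close>
  define s0 where "s0 = (if a 0 then \<not> q else (\<exists>k. a k) \<and> odd ((LEAST k. a k) - 1))"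
  define s where "s = rec_nat s0 (\<lambda>n r. if a (Suc n) then \<not> q else \<not> r)"
  have s_0: "s 0 = s0" and s_Suc: "\<And>n. s (Suc n) = (if a (Suc n) then \<not> q else \<not> s n)"
    unfolding s_def by simp_all
  have no_one_yet: "s n = (s0 \<noteq> odd n)" if "\<forall>k\<le>n. \<not> a k" for n
    using that by (induction n) (auto simp: s_0 s_Suc)
  have at_one: "s j = (\<not> q)" if "a j" for j
    using that by (cases j) (simp_all add: s_0 s0_def s_Suc)
  have since_one: "s (j + d) = ((\<not> q) \<noteq> odd d)"
    if "a j" "\<forall>k. j < k \<and> k \<le> j + d \<longrightarrow> \<not> a k" for j d
    using that by (induction d) (auto simp: s_Suc at_one)
  have before_one: "\<not> s n" if one: "a (Suc n)" for n
  proof (cases "\<exists>j\<le>n. a j")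
    case True
    then obtain i where i: "i \<le> n" "a i" and zeros: "\<forall>k. i < k \<and> k \<le> n \<longrightarrow> \<not> a k"
      using last_true_upto by blast
    then have "gap a i (n - i)" unfolding gap_def using one by auto
    then have "odd (n - i) \<noteq> q" using adm unfolding admissible_seq_def by blast
    moreover have "s n = ((\<not> q) \<noteq> odd (n - i))" using since_one[of i "n - i"] i zeros by simp
    ultimately show ?thesis by argo
  next
    case False
    then have "(LEAST k. a k) = Suc n"
      using one by (intro Least_equality) (auto simp: not_less_eq_eq[symmetric])
    with False one have "s0 = odd n" unfolding s0_def by auto
    then show ?thesis using no_one_yet[of n] False by auto
  qed
  have "\<exists>p. graph_edge q p (a 0) (s 0)"
    by (cases "a 0") (auto simp: graph_edge_def s_0 s0_def)
  moreover have "graph_edge q (s n) (a (Suc n)) (s (Suc n))" for n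
    using before_one[of n] by (auto simp: graph_edge_def s_Suc)
  ultimately have "(\<lambda>n. (a n, s n)) \<in> graph_paths q" unfolding graph_paths_def by simp
  then show ?thesis by blast
qed

section \<open>The substitution \<open>1 \<mapsto> 10\<close>\<close>

text \<open>A 1-edge of the even graph becomes a 1-edge into state True followed by a 0-edge back to
  the original target state, which is False.\<close>

fun pad :: "(nat \<Rightarrow> bool \<times> bool) \<Rightarrow> nat \<Rightarrow> bool \<times> bool" where
  "pad z 0 = (if fst (z 0) then (True, True) else z 0)"
| "pad z (Suc 0) = (if fst (z 0) then (False, snd (z 0)) else pad (shiftn 1 z) 0)"
| "pad z (Suc (Suc m)) = (if fst (z 0) then pad (shiftn 1 z) m else pad (shiftn 1 z) (Suc m))"

fun unpad :: "(nat \<Rightarrow> bool \<times> bool) \<Rightarrow> nat \<Rightarrow> bool \<times> bool" where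
  "unpad w 0 = (if fst (w 0) then (True, snd (w 1)) else w 0)"
| "unpad w (Suc n) = unpad (shiftn (if fst (w 0) then 2 else 1) w) n"

lemma fst_pad_0: "fst (pad z 0) = fst (z 0)"
  by simp

lemma fst_unpad_0: "fst (unpad w 0) = fst (w 0)"
  by simp

lemma pad_shift: "shiftn (if fst (z 0) then 2 else 1) (pad z) = pad (shiftn 1 z)"
proof
  fix n
  show "shiftn (if fst (z 0) then 2 else 1) (pad z) n = pad (shiftn 1 z) n"
    by (cases n) (auto simp: numeral_2_eq_2 shiftn_apply)
qed

lemma unpad_shift: "shiftn 1 (unpad w) = unpad (shiftn (if fst (w 0) then 2 else 1) w)"
  by (rule ext) (simp add: shiftn_apply del: unpad.simps(1))

lemma unpad_pad: "unpad (pad z) = z"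
proof
  fix n
  show "unpad (pad z) n = z n"
  proof (rule shift_induct[where S = UNIV and P = "\<lambda>z n. unpad (pad z) n = z n"])
    fix z :: "nat \<Rightarrow> bool \<times> bool"
    have "shiftn 1 (unpad (pad z)) = unpad (pad (shiftn 1 z))"
      unfolding unpad_shift fst_pad_0 pad_shift ..
    then show "\<exists>c>0. (\<forall>n<c. unpad (pad z) n = z n) \<and> shiftn c z \<in> UNIV \<and>
        (\<forall>n. unpad (pad (shiftn c z)) n = shiftn c z n \<longrightarrow> unpad (pad z) (n + c) = z (n + c))"
      by (intro exI[of _ 1]) (auto simp: fun_eq_iff shiftn_apply prod_eq_iff)
  qed simp
qed

lemma pad_unpad: "w \<in> graph_paths False \<Longrightarrow> pad (unpad w) = w"
proof
  fix n assume "w \<in> graph_paths False"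
  then show "pad (unpad w) n = w n"
  proof (rule shift_induct[where P = "\<lambda>w n. pad (unpad w) n = w n"])
    fix w assume w: "w \<in> graph_paths False"
    define c where "c = (if fst (w 0) then 2 else 1::nat)"
    have shift: "shiftn c (pad (unpad w)) = pad (unpad (shiftn c w))"
      unfolding c_def using pad_shift[of "unpad w"] unfolding fst_unpad_0 unpad_shift .
    have "pad (unpad w) 0 = w 0"
      using graph_paths_start_one[OF w] by (cases "w 0") auto
    moreover have "pad (unpad w) 1 = w 1" if "fst (w 0)"
      using that graph_paths_start_one[OF w] graph_paths_step_one[OF w, of 0] by (cases "w 1") auto
    ultimately have "pad (unpad w) n = w n" if "n < c" for n
      using that by (cases n) (auto simp: c_def split: if_splits)
    moreover have "pad (unpad w) (n + c) = w (n + c)"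
      if "pad (unpad (shiftn c w)) n = shiftn c w n" for n
      using that fun_cong[OF shift, of n] by (simp add: shiftn_apply)
    moreover have "c > 0" by (simp add: c_def)
    ultimately show "\<exists>c>0. (\<forall>n<c. pad (unpad w) n = w n) \<and> shiftn c w \<in> graph_paths False \<and>
        (\<forall>n. pad (unpad (shiftn c w)) n = shiftn c w n \<longrightarrow> pad (unpad w) (n + c) = w (n + c))"
      using graph_paths_shift[OF w] by blast
  qed
qed

lemma pad_graph_paths:
  assumes "z \<in> graph_paths True"
  shows "pad z \<in> graph_paths False"
proof -
  let ?edge = "\<lambda>w n. graph_edge False (snd (w n)) (fst (w (Suc n))) (snd (w (Suc n)))"
  have "?edge w n" if "w \<in> pad ` graph_paths True" for w n
    using that
  proof (rule shift_induct[where P = ?edge])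
    fix w assume "w \<in> pad ` graph_paths True"
    then obtain z where z: "z \<in> graph_paths True" and w: "w = pad z" by blast
    define c where "c = (if fst (z 0) then 2 else 1::nat)"
    have "shiftn c w = pad (shiftn 1 z)" unfolding w c_def by (rule pad_shift)
    then have "shiftn c w \<in> pad ` graph_paths True"
      by (rule image_eqI[OF _ graph_paths_shift[OF z]])
    moreover have "?edge w n" if "n < c" for n
      using that graph_paths_start_one[OF z] graph_paths_step_one[OF z, of 0]
        graph_paths_step_zero[OF z, of 0]
      by (cases "fst (z 0)"; cases "fst (z 1)"; cases n)
        (auto simp: w c_def graph_edge_def shiftn_apply numeral_2_eq_2)
    moreover have "?edge (shiftn c w) n \<Longrightarrow> ?edge w (n + c)" for n
      by (simp add: shiftn_apply)
    moreover have "c > 0" by (simp add: c_def)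
    ultimately show "\<exists>c>0. (\<forall>n<c. ?edge w n) \<and> shiftn c w \<in> pad ` graph_paths True \<and>
        (\<forall>n. ?edge (shiftn c w) n \<longrightarrow> ?edge w (n + c))"
      by blast
  qed
  then have "?edge (pad z) n" for n using assms by blast
  moreover have "\<exists>p. graph_edge False p (fst (pad z 0)) (snd (pad z 0))"
    by (cases "fst (z 0)") (auto simp: graph_edge_def)
  ultimately show ?thesis unfolding graph_paths_def by blast
qed

lemma unpad_graph_paths:
  assumes "w \<in> graph_paths False"
  shows "unpad w \<in> graph_paths True"
proof -
  let ?edge = "\<lambda>z n. graph_edge True (snd (z n)) (fst (z (Suc n))) (snd (z (Suc n)))"
  have "?edge z n" if "z \<in> unpad ` graph_paths False" for z n
    using that
  proof (rule shift_induct[where P = ?edge])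
    fix z assume "z \<in> unpad ` graph_paths False"
    then obtain w where w: "w \<in> graph_paths False" and z: "z = unpad w" by blast
    define c where "c = (if fst (w 0) then 2 else 1::nat)"
    have "shiftn 1 z = unpad (shiftn c w)" unfolding z c_def by (rule unpad_shift)
    then have "shiftn 1 z \<in> unpad ` graph_paths False"
      by (rule image_eqI[OF _ graph_paths_shift[OF w]])
    moreover have "?edge z 0"
      using graph_paths_start_one[OF w] graph_paths_step_one[OF w] graph_paths_step_zero[OF w]
      by (cases "fst (w 0)"; cases "fst (w 1)"; cases "fst (w 2)")
        (auto simp: z graph_edge_def shiftn_apply numeral_2_eq_2)
    moreover have "?edge (shiftn 1 z) n \<Longrightarrow> ?edge z (n + 1)" for n
      by (simp add: shiftn_apply)
    ultimately show "\<exists>c>0. (\<forall>n<c. ?edge z n) \<and> shiftn c z \<in> unpad ` graph_paths False \<and>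
        (\<forall>n. ?edge (shiftn c z) n \<longrightarrow> ?edge z (n + c))"
      by (intro exI[of _ 1]) auto
  qed
  then have "?edge (unpad w) n" for n using assms by blast
  moreover have "\<exists>p. graph_edge True p (fst (unpad w 0)) (snd (unpad w 0))"
    using graph_paths_start_one[OF assms] graph_paths_step_zero[OF assms, of 0]
      graph_paths_step_one[OF assms, of 0]
    by (cases "fst (w 0)"; cases "fst (w 1)") (auto simp: graph_edge_def)
  ultimately show ?thesis unfolding graph_paths_def by blast
qed

definition pad_labels :: "(nat \<Rightarrow> bool) \<Rightarrow> nat \<Rightarrow> bool" where
  "pad_labels a = (\<lambda>n. fst (pad (\<lambda>k. (a k, False)) n))"

definition unpad_labels :: "(nat \<Rightarrow> bool) \<Rightarrow> nat \<Rightarrow> bool" where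
  "unpad_labels a = (\<lambda>n. fst (unpad (\<lambda>k. (a k, False)) n))"

lemma pad_fst_cong: "(\<And>k. fst (z k) = fst (z' k)) \<Longrightarrow> fst (pad z n) = fst (pad z' n)"
proof (induction n arbitrary: z z' rule: less_induct)
  case (less n)
  have e0: "fst (z 0) = fst (z' 0)" using less.prems by blast
  have es: "\<And>k. fst (shiftn 1 z k) = fst (shiftn 1 z' k)" using less.prems
    by (simp add: shiftn_apply)
  have ih: "\<And>y. y < n \<Longrightarrow> fst (pad (shiftn 1 z) y) = fst (pad (shiftn 1 z') y)"
    using less.IH es by blast
  show ?case
  proof (cases n)
    case 0 then show ?thesis using e0 by simp
  next
    case (Suc m)
    show ?thesis
    proof (cases m)
      case 0 then show ?thesis using Suc e0 ih[of 0] by simp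
    next
      case (Suc k)
      then show ?thesis using \<open>n = Suc m\<close> e0 ih[of k] ih[of "Suc k"] by simp
    qed
  qed
qed

lemma unpad_fst_cong: "(\<And>k. fst (z k) = fst (z' k)) \<Longrightarrow> fst (unpad z n) = fst (unpad z' n)"
proof (induction n arbitrary: z z')
  case 0 then show ?case by simp
next
  case (Suc n)
  have e0: "fst (z 0) = fst (z' 0)" using Suc.prems by blast
  define c where "c = (if fst (z 0) then 2 else 1::nat)"
  have "\<And>k. fst (shiftn c z k) = fst (shiftn c z' k)" using Suc.prems by (simp add: shiftn_apply)
  then have "fst (unpad (shiftn c z) n) = fst (unpad (shiftn c z') n)" using Suc.IH by blast
  then show ?case using e0 unfolding c_def by simp
qed

lemma fst_pad: "fst (pad z n) = pad_labels (\<lambda>k. fst (z k)) n"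
  unfolding pad_labels_def by (rule pad_fst_cong) simp

lemma fst_unpad: "fst (unpad z n) = unpad_labels (\<lambda>k. fst (z k)) n"
  unfolding unpad_labels_def by (rule unpad_fst_cong) simp

lemma admissible_pad_labels: "admissible_seq True a \<Longrightarrow> admissible_seq False (pad_labels a)"
proof -
  assume "admissible_seq True a"
  then obtain s where z: "(\<lambda>n. (a n, s n)) \<in> graph_paths True" using admissible_seq_path by blast
  have "admissible_seq False (\<lambda>n. fst (pad (\<lambda>n. (a n, s n)) n))"
    using admissible_path_labels pad_graph_paths[OF z] by blast
  then show ?thesis unfolding fst_pad by simp
qed

lemma admissible_unpad_labels: "admissible_seq False a \<Longrightarrow> admissible_seq True (unpad_labels a)"
proof -
  assume "admissible_seq False a"
  then obtain s where z: "(\<lambda>n. (a n, s n)) \<in> graph_paths False" using admissible_seq_path by blast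
  have "admissible_seq True (\<lambda>n. fst (unpad (\<lambda>n. (a n, s n)) n))"
    using admissible_path_labels unpad_graph_paths[OF z] by blast
  then show ?thesis unfolding fst_unpad by simp
qed

lemma unpad_pad_labels: "unpad_labels (pad_labels a) = a"
proof (rule ext)
  fix n
  have "unpad_labels (pad_labels a) n = fst (unpad (pad (\<lambda>k. (a k, False))) n)"
    unfolding fst_unpad fst_pad by simp
  then show "unpad_labels (pad_labels a) n = a n" unfolding unpad_pad by simp
qed

lemma pad_unpad_labels: "admissible_seq False a \<Longrightarrow> pad_labels (unpad_labels a) = a"
proof (rule ext)
  fix n assume "admissible_seq False a"
  then obtain s where z: "(\<lambda>n. (a n, s n)) \<in> graph_paths False" using admissible_seq_path by blast
  have "pad_labels (unpad_labels a) n = fst (pad (unpad (\<lambda>n. (a n, s n))) n)"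
    unfolding fst_unpad fst_pad by simp
  then show "pad_labels (unpad_labels a) n = a n" unfolding pad_unpad[OF z] by simp
qed

section \<open>Continuity\<close>

abbreviation discrete_seqs :: "(nat \<Rightarrow> 'a) topology" where
  "discrete_seqs \<equiv> product_topology (\<lambda>_. discrete_topology UNIV) UNIV"

abbreviation path_topology :: "(nat \<Rightarrow> 'a \<times> (nat \<Rightarrow> 'b)) topology" where
  "path_topology \<equiv> product_topology (\<lambda>_. prod_topology (discrete_topology UNIV) discrete_seqs) UNIV"

lemma continuous_map_finite_dependence:
  fixes F :: "(nat \<Rightarrow> 'a) \<Rightarrow> 'b"
  assumes dep: "\<And>z z'. (\<forall>k<N. z k = z' k) \<Longrightarrow> F z = F z'"
  shows "continuous_map discrete_seqs (discrete_topology UNIV) F"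
  unfolding continuous_map
proof (intro conjI allI impI)
  fix U :: "'b set"
  show "openin discrete_seqs {x \<in> topspace discrete_seqs. F x \<in> U}"
  proof (subst openin_subopen, intro ballI)
    fix x assume x: "x \<in> {x \<in> topspace discrete_seqs. F x \<in> U}"
    define T where "T = (\<Pi>\<^sub>E k\<in>(UNIV::nat set). if k < N then {x k} else UNIV)"
    have "{i. (if i < N then {x i} else UNIV) \<noteq> topspace (discrete_topology UNIV)} \<subseteq> {..<N}"
      by auto
    then have "openin discrete_seqs T"
      unfolding T_def by (intro product_topology_basis) (auto intro: finite_subset)
    moreover have "x \<in> T" unfolding T_def by auto
    moreover have "T \<subseteq> {x \<in> topspace discrete_seqs. F x \<in> U}"
    proof
      fix y assume "y \<in> T"
      then have "\<forall>k. y k \<in> (if k < N then {x k} else UNIV)" unfolding T_def by (simp add: PiE_iff)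
      then have "\<forall>k<N. y k = x k" by (metis singletonD)
      then have "F y = F x" using dep by metis
      then show "y \<in> {x \<in> topspace discrete_seqs. F x \<in> U}" using x by simp
    qed
    ultimately show "\<exists>T. openin discrete_seqs T \<and> x \<in> T \<and> T \<subseteq> {x \<in> topspace discrete_seqs. F x \<in> U}"
      by blast
  qed
qed auto

lemma continuous_map_componentwise_finite_dependence:
  fixes F :: "(nat \<Rightarrow> 'a) \<Rightarrow> nat \<Rightarrow> 'b"
  assumes "\<And>n. \<exists>N. \<forall>z z'. (\<forall>k<N. z k = z' k) \<longrightarrow> F z n = F z' n"
  shows "continuous_map discrete_seqs discrete_seqs F"
  unfolding continuous_map_componentwise_UNIV
proof
  fix n
  obtain N where "\<forall>z z'. (\<forall>k<N. z k = z' k) \<longrightarrow> F z n = F z' n" using assms by blast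
  then show "continuous_map discrete_seqs (discrete_topology UNIV) (\<lambda>x. F x n)"
    by (intro continuous_map_finite_dependence[of N]) blast
qed

lemma pad_local: "(\<forall>k\<le>n. z k = z' k) \<Longrightarrow> pad z n = pad z' n"
  by (induction z n arbitrary: z' rule: pad.induct) (auto simp: shiftn_apply)

lemma unpad_local: "(\<forall>k\<le>2 * n + 1. w k = w' k) \<Longrightarrow> unpad w n = unpad w' n"
  by (induction w n arbitrary: w' rule: unpad.induct) (auto simp: shiftn_apply)

lemma continuous_map_pad: "continuous_map discrete_seqs discrete_seqs pad"
proof (rule continuous_map_componentwise_finite_dependence)
  fix n show "\<exists>N. \<forall>z z'. (\<forall>k<N. z k = z' k) \<longrightarrow> pad z n = pad z' n"
    by (intro exI[of _ "Suc n"]) (simp add: pad_local less_Suc_eq_le)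
qed

lemma continuous_map_unpad: "continuous_map discrete_seqs discrete_seqs unpad"
proof (rule continuous_map_componentwise_finite_dependence)
  fix n show "\<exists>N. \<forall>w w'. (\<forall>k<N. w k = w' k) \<longrightarrow> unpad w n = unpad w' n"
    by (intro exI[of _ "2 * n + 2"]) (simp add: unpad_local less_Suc_eq_le)
qed

lemma continuous_map_pad_labels: "continuous_map discrete_seqs discrete_seqs pad_labels"
proof (rule continuous_map_componentwise_finite_dependence)
  fix n show "\<exists>N. \<forall>a a'. (\<forall>k<N. a k = a' k) \<longrightarrow> pad_labels a n = pad_labels a' n"
  proof (intro exI[of _ "Suc n"] allI impI)
    fix a a' :: "nat \<Rightarrow> bool" assume "\<forall>k<Suc n. a k = a' k"
    then have "pad (\<lambda>k. (a k, False)) n = pad (\<lambda>k. (a' k, False)) n" by (intro pad_local) auto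
    then show "pad_labels a n = pad_labels a' n" by (simp add: pad_labels_def)
  qed
qed

lemma continuous_map_unpad_labels: "continuous_map discrete_seqs discrete_seqs unpad_labels"
proof (rule continuous_map_componentwise_finite_dependence)
  fix n show "\<exists>N. \<forall>a a'. (\<forall>k<N. a k = a' k) \<longrightarrow> unpad_labels a n = unpad_labels a' n"
  proof (intro exI[of _ "2 * n + 2"] allI impI)
    fix a a' :: "nat \<Rightarrow> bool" assume "\<forall>k<2 * n + 2. a k = a' k"
    then have "unpad (\<lambda>k. (a k, False)) n = unpad (\<lambda>k. (a' k, False)) n" by (intro unpad_local) auto
    then show "unpad_labels a n = unpad_labels a' n" by (simp add: unpad_labels_def)
  qed
qed

lemma continuous_map_path_coordinate:
  "continuous_map path_topology (prod_topology (discrete_topology UNIV) discrete_seqs) (\<lambda>x. x n)"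
  by (rule continuous_map_product_projection) simp

lemma continuous_map_path_label:
  "continuous_map path_topology (discrete_topology UNIV) (\<lambda>x. fst (x n))"
  using continuous_map_compose[OF continuous_map_path_coordinate continuous_map_fst]
  by (simp add: o_def)

lemma continuous_map_path_vertex:
  "continuous_map path_topology (discrete_topology UNIV) (\<lambda>x. snd (x n) l)"
proof -
  have "continuous_map path_topology discrete_seqs (\<lambda>x. snd (x n))"
    using continuous_map_compose[OF continuous_map_path_coordinate continuous_map_snd]
    by (simp add: o_def)
  moreover have "continuous_map discrete_seqs (discrete_topology UNIV) (\<lambda>f. f l)"
    by (rule continuous_map_product_projection) simp
  ultimately show ?thesis by (rule continuous_map_compose[unfolded o_def])
qed

lemma continuous_map_decode_path: "continuous_map path_topology discrete_seqs (decode_path q)"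
  unfolding continuous_map_componentwise_UNIV
proof
  fix n
  have "continuous_map path_topology
      (prod_topology (discrete_topology UNIV) (discrete_topology UNIV))
      (\<lambda>x. (fst (x n), snd (x n) 1))"
    by (intro continuous_map_pairedI continuous_map_path_label continuous_map_path_vertex)
  then have c:
    "continuous_map path_topology (discrete_topology UNIV) (\<lambda>x. (fst (x n), snd (x n) 1))"
    by (simp flip: prod_topology_discrete_topology)
  have d: "continuous_map (discrete_topology UNIV) (discrete_topology UNIV)
      (\<lambda>p. (fst p, snd p = parity_class q True))"
    by simp
  show "continuous_map path_topology (discrete_topology UNIV) (\<lambda>x. decode_path q x n)"
    using continuous_map_compose[OF c d] unfolding decode_path_def by (simp add: o_def)
qed

lemma continuous_map_encode_path: "continuous_map discrete_seqs path_topology (encode_path q)"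
  unfolding continuous_map_componentwise_UNIV
proof
  fix n
  have c: "continuous_map discrete_seqs (discrete_topology UNIV) (\<lambda>z::nat \<Rightarrow> bool \<times> bool. z n)"
    by (rule continuous_map_product_projection) simp
  have d: "continuous_map (discrete_topology UNIV)
      (prod_topology (discrete_topology UNIV) discrete_seqs)
      (\<lambda>p. (fst p, omega_point q (snd p)))"
    by simp
  show "continuous_map discrete_seqs (prod_topology (discrete_topology UNIV) discrete_seqs)
      (\<lambda>z. encode_path q z n)"
    using continuous_map_compose[OF c d] unfolding encode_path_def by (simp add: o_def)
qed

lemma topspace_topXL [simp]: "topspace (topXL \<Lambda>) = XL \<Lambda>"
  by (simp add: topXL_def)

lemma topspace_topXLam [simp]: "topspace (topXLam \<Lambda>) = XLam \<Lambda>"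
  by (simp add: topXLam_def)

lemma continuous_map_topXL:
  assumes "continuous_map path_topology path_topology f" "\<And>x. x \<in> XL \<Lambda> \<Longrightarrow> f x \<in> XL \<Lambda>'"
  shows "continuous_map (topXL \<Lambda>) (topXL \<Lambda>') f"
  unfolding topXL_def using assms
  by (intro continuous_map_into_subtopology continuous_map_from_subtopology) auto

lemma continuous_map_topXLam:
  assumes "continuous_map discrete_seqs discrete_seqs f" "\<And>x. x \<in> XLam \<Lambda> \<Longrightarrow> f x \<in> XLam \<Lambda>'"
  shows "continuous_map (topXLam \<Lambda>) (topXLam \<Lambda>') f"
  unfolding topXLam_def using assms
  by (intro continuous_map_into_subtopology continuous_map_from_subtopology) auto

lemma continuous_map_first_label:
  "continuous_map (topXL \<Lambda>) (discrete_topology UNIV) (\<lambda>x. if fst (x 0) then a else b)"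
proof -
  have "continuous_map (topXL \<Lambda>) (discrete_topology UNIV) (\<lambda>x. fst (x 0))"
    unfolding topXL_def by (rule continuous_map_from_subtopology) (rule continuous_map_path_label)
  moreover have
    "continuous_map (discrete_topology UNIV) (discrete_topology UNIV) (\<lambda>p. if p then a else b)"
    by simp
  ultimately show ?thesis by (rule continuous_map_compose[unfolded o_def])
qed

section \<open>The orbit equivalence\<close>

definition pad_XL :: "XL_point \<Rightarrow> XL_point" where
  "pad_XL x = encode_path False (pad (decode_path True x))"

definition unpad_XL :: "XL_point \<Rightarrow> XL_point" where
  "unpad_XL y = encode_path True (unpad (decode_path False y))"

lemma homeomorphic_maps_pad_XL:
  "homeomorphic_maps (topXL (gap_shift True)) (topXL (gap_shift False)) pad_XL unpad_XL"
proof -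
  have "continuous_map path_topology path_topology pad_XL"
    unfolding pad_XL_def
    using continuous_map_compose[OF
        continuous_map_compose[OF continuous_map_decode_path continuous_map_pad]
        continuous_map_encode_path]
    by (simp add: o_def)
  moreover have "continuous_map path_topology path_topology unpad_XL"
    unfolding unpad_XL_def
    using continuous_map_compose[OF
        continuous_map_compose[OF continuous_map_decode_path continuous_map_unpad]
        continuous_map_encode_path]
    by (simp add: o_def)
  moreover have "pad_XL x \<in> XL (gap_shift False) \<and> unpad_XL (pad_XL x) = x"
    if "x \<in> XL (gap_shift True)" for x
    using XL_gap_shift_decode[OF that] pad_graph_paths
    unfolding pad_XL_def unpad_XL_def XL_gap_shift by (auto simp: unpad_pad)
  moreover have "unpad_XL y \<in> XL (gap_shift True) \<and> pad_XL (unpad_XL y) = y"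
    if "y \<in> XL (gap_shift False)" for y
    using XL_gap_shift_decode[OF that] unpad_graph_paths
    unfolding pad_XL_def unpad_XL_def XL_gap_shift by (auto simp: pad_unpad)
  ultimately show ?thesis
    unfolding homeomorphic_maps_def topspace_topXL by (blast intro: continuous_map_topXL)
qed

lemma homeomorphic_map_pad_labels:
  "homeomorphic_map (topXLam (gap_shift True)) (topXLam (gap_shift False)) pad_labels"
  unfolding homeomorphic_map_maps homeomorphic_maps_def topspace_topXLam XLam_gap_shift
proof (intro exI[of _ unpad_labels] conjI ballI)
  show "continuous_map (topXLam (gap_shift True)) (topXLam (gap_shift False)) pad_labels"
    by (rule continuous_map_topXLam[OF continuous_map_pad_labels])
      (simp add: XLam_gap_shift admissible_pad_labels)
  show "continuous_map (topXLam (gap_shift False)) (topXLam (gap_shift True)) unpad_labels"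
    by (rule continuous_map_topXLam[OF continuous_map_unpad_labels])
      (simp add: XLam_gap_shift admissible_unpad_labels)
qed (simp_all add: unpad_pad_labels pad_unpad_labels)

lemma piL_pad_XL: "piL (pad_XL x) = pad_labels (piL x)"
  unfolding piL_def pad_XL_def encode_path_def fst_pad by (simp add: decode_path_def)

lemma pad_XL_shift: "pad_XL (shiftn 1 x) = shiftn (if fst (x 0) then 2 else 1) (pad_XL x)"
  unfolding pad_XL_def decode_path_shiftn encode_path_shiftn
    pad_shift[of "decode_path True x", unfolded fst_decode_path, symmetric] ..

lemma unpad_XL_shift:
  assumes "y \<in> XL (gap_shift False)"
  shows "shiftn (if fst (y 0) then 1 else 0) (unpad_XL (shiftn 1 y)) = shiftn 1 (unpad_XL y)"
proof -
  define w where "w = decode_path False y"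
  have w: "w \<in> graph_paths False" using XL_gap_shift_decode[OF assms] unfolding w_def by simp
  have "shiftn 1 (unpad_XL y) = encode_path True (unpad (shiftn (if fst (y 0) then 2 else 1) w))"
    unfolding unpad_XL_def encode_path_shiftn[symmetric] unpad_shift w_def fst_decode_path ..
  moreover have "shiftn (if fst (y 0) then 1 else 0) (unpad_XL (shiftn 1 y)) =
      encode_path True (unpad (shiftn (if fst (y 0) then 2 else 1) w))"
  proof (cases "fst (y 0)")
    case True
    then have "\<not> fst (w 1)"
      using graph_paths_start_one[OF w] graph_paths_step_one[OF w, of 0]
      by (auto simp: w_def fst_decode_path)
    then have "shiftn 1 (unpad (shiftn 1 w)) = unpad (shiftn 2 w)"
      unfolding unpad_shift by (simp add: shiftn_apply numeral_2_eq_2)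
    then show ?thesis
      using True
      unfolding unpad_XL_def decode_path_shiftn w_def[symmetric] encode_path_shiftn[symmetric]
      by simp
  qed (simp add: unpad_XL_def decode_path_shiftn w_def)
  ultimately show ?thesis by simp
qed

theorem corollary6p9:
  shows "coe even_shift odd_shift"
  unfolding coe_def even_shift_eq_gap_shift odd_shift_eq_gap_shift
proof (intro exI conjI)
  show "homeomorphic_maps (topXL (gap_shift True)) (topXL (gap_shift False)) pad_XL unpad_XL"
    by (rule homeomorphic_maps_pad_XL)
  show "homeomorphic_map (topXLam (gap_shift True)) (topXLam (gap_shift False)) pad_labels"
    by (rule homeomorphic_map_pad_labels)
  show "continuous_map (topXL (gap_shift True)) (discrete_topology UNIV) (\<lambda>x. 0::nat)"
    by simp
  show "continuous_map (topXL (gap_shift True)) (discrete_topology UNIV)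
      (\<lambda>x. if fst (x 0) then 2 else 1::nat)"
    by (rule continuous_map_first_label)
  show "continuous_map (topXL (gap_shift False)) (discrete_topology UNIV)
      (\<lambda>y. if fst (y 0) then 1 else 0::nat)"
    by (rule continuous_map_first_label)
  show "continuous_map (topXL (gap_shift False)) (discrete_topology UNIV) (\<lambda>y. 1::nat)"
    by simp
  show "\<forall>x\<in>XL (gap_shift True). piL (pad_XL x) = pad_labels (piL x)"
    by (simp add: piL_pad_XL)
  show "\<forall>x\<in>XL (gap_shift True).
      shiftn 0 (pad_XL (shiftn 1 x)) = shiftn (if fst (x 0) then 2 else 1) (pad_XL x)"
    by (simp only: shiftn_0 pad_XL_shift) blast
  show "\<forall>y\<in>XL (gap_shift False).
      shiftn (if fst (y 0) then 1 else 0) (unpad_XL (shiftn 1 y)) = shiftn 1 (unpad_XL y)"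
    using unpad_XL_shift by blast
qed

end
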